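(* Let $(\alpha,\xi)$ be an outer action of a dg Lie algebra $\mathfrak g$ on a dg Lie algebra $L$, and let $C$ be a counital cocommutative dg coalgebra with counit $\varepsilon$. Define $\tilde\alpha\colon\mathfrak g\otimes\mathrm{Hom}(C,L)\to\mathrm{Hom}(C,L)$ by $(x.f)(c)=x.f(c)$, and $\tilde\xi\colon\mathfrak g\to\mathrm{Hom}(C,L)$ by $\tilde\xi(x)(c)=\varepsilon(c)\,\xi(x)$. Then $(\tilde\alpha,\tilde\xi)$ is an outer action of $\mathfrak g$ on the convolution dg Lie algebra $\mathrm{Hom}(C,L)$.
   Context: The convolution dg Lie algebra $\mathrm{Hom}(C,L)$ has differential $\partial f=d_L\circ f-(-1)^{|f|}f\circ d_C$ and bracket $[f,g]=\ell\circ(f\otimes g)\circ\Delta$, where $\ell$ is the bracket of $L$ and $\Delta$ the coproduct of $C$. An outer action of $\mathfrak g$ on a dg Lie algebra $L$ is a pair $(\alpha,\xi)$, $\alpha\colon\mathfrak g\otimes L\to L$ of degree $0$ written $x.a$, $\xi\colon\mathfrak g\to L$ of degree $-1$, satisfying: (I) $[x,y].a=x.(y.a)-(-1)^{|x||y|}y.(x.a)$; (II) $x.[a,b]=[x.a,b]+(-1)^{|x||a|}[a,x.b]$; (III) $d\xi=-\xi d$; (IV) $\xi[x,y]=-(-1)^{|y||\xi(x)|}y.\xi(x)+(-1)^{|x|}x.\xi(y)$; (V) $d(x.a)=d(x).a+(-1)^{|x|}x.d(a)+[\xi(x),a]$. *)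

theory Defs
  imports Complex_Main "HOL-Library.Function_Algebras"
begin

text \<open>Degrees are homological: differentials have degree -1.\<close>

definition ksign :: "int \<Rightarrow> 'k::field" where
  "ksign n = (if even n then 1 else - 1)"

definition graded_vs :: "('k::field \<Rightarrow> 'v::ab_group_add \<Rightarrow> 'v) \<Rightarrow> (int \<Rightarrow> 'v set) \<Rightarrow> bool" where
  "graded_vs sc G \<longleftrightarrow>
     vector_space sc \<and>
     (\<forall>n. module.subspace sc (G n)) \<and>
     (\<forall>v. \<exists>S f. finite S \<and> (\<forall>n\<in>S. f n \<in> G n) \<and> v = sum f S) \<and>
     (\<forall>S f. finite S \<and> (\<forall>n\<in>S. f n \<in> G n) \<and> sum f S = 0 \<longrightarrow> (\<forall>n\<in>S. f n = 0))"

definition dgla :: "('k::field \<Rightarrow> 'v::ab_group_add \<Rightarrow> 'v) \<Rightarrow> (int \<Rightarrow> 'v set)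
    \<Rightarrow> ('v \<Rightarrow> 'v) \<Rightarrow> ('v \<Rightarrow> 'v \<Rightarrow> 'v) \<Rightarrow> bool" where
  "dgla sc G d br \<longleftrightarrow>
     graded_vs sc G \<and>
     Vector_Spaces.linear sc sc d \<and>
     (\<forall>n. \<forall>a\<in>G n. d a \<in> G (n - 1)) \<and>
     (\<forall>a. d (d a) = 0) \<and>
     (\<forall>a. Vector_Spaces.linear sc sc (br a)) \<and>
     (\<forall>b. Vector_Spaces.linear sc sc (\<lambda>a. br a b)) \<and>
     (\<forall>m n. \<forall>a\<in>G m. \<forall>b\<in>G n. br a b \<in> G (m + n)) \<and>
     (\<forall>m n. \<forall>a\<in>G m. \<forall>b\<in>G n. br a b = - sc (ksign (m * n)) (br b a)) \<and>
     (\<forall>m n p. \<forall>a\<in>G m. \<forall>b\<in>G n. \<forall>c\<in>G p.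
        br a (br b c) = br (br a b) c + sc (ksign (m * n)) (br b (br a c))) \<and>
     (\<forall>m n. \<forall>a\<in>G m. \<forall>b\<in>G n. d (br a b) = br (d a) b + sc (ksign m) (br a (d b)))"

text \<open>Elements of C \<otimes> C are represented by finite lists of degree-tagged pure
tensors (p, a, q, b) standing for a \<otimes> b with a of degree p and b of degree q.
Two such lists denote the same tensor iff every scalar-valued bilinear form
takes the same value on them (this characterises equality in C \<otimes> C over a
field). Similarly for C \<otimes> C \<otimes> C with trilinear forms.\<close>

definition bilin_form :: "('k::field \<Rightarrow> 'c::ab_group_add \<Rightarrow> 'c) \<Rightarrow> ('c \<Rightarrow> 'c \<Rightarrow> 'k) \<Rightarrow> bool" where
  "bilin_form sc \<beta> \<longleftrightarrow> (\<forall>a. Vector_Spaces.linear sc (*) (\<beta> a)) \<and>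
                        (\<forall>b. Vector_Spaces.linear sc (*) (\<lambda>a. \<beta> a b))"

definition trilin_form :: "('k::field \<Rightarrow> 'c::ab_group_add \<Rightarrow> 'c) \<Rightarrow> ('c \<Rightarrow> 'c \<Rightarrow> 'c \<Rightarrow> 'k) \<Rightarrow> bool" where
  "trilin_form sc \<tau> \<longleftrightarrow> (\<forall>a b. Vector_Spaces.linear sc (*) (\<tau> a b)) \<and>
                        (\<forall>a c. Vector_Spaces.linear sc (*) (\<lambda>b. \<tau> a b c)) \<and>
                        (\<forall>b c. Vector_Spaces.linear sc (*) (\<lambda>a. \<tau> a b c))"

definition tev :: "(int \<Rightarrow> 'c \<Rightarrow> int \<Rightarrow> 'c \<Rightarrow> 'w::comm_monoid_add) \<Rightarrow> (int \<times> 'c \<times> int \<times> 'c) list \<Rightarrow> 'w" where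
  "tev \<phi> xs = sum_list (map (\<lambda>(p, a, q, b). \<phi> p a q b) xs)"

definition cc_dg_coalgebra :: "('k::field \<Rightarrow> 'c::ab_group_add \<Rightarrow> 'c) \<Rightarrow> (int \<Rightarrow> 'c set)
    \<Rightarrow> ('c \<Rightarrow> 'c) \<Rightarrow> ('c \<Rightarrow> (int \<times> 'c \<times> int \<times> 'c) list) \<Rightarrow> ('c \<Rightarrow> 'k) \<Rightarrow> bool" where
  "cc_dg_coalgebra sc G d \<Delta> \<epsilon> \<longleftrightarrow>
     graded_vs sc G \<and>
     \<comment> \<open>differential\<close>
     Vector_Spaces.linear sc sc d \<and>
     (\<forall>n. \<forall>c\<in>G n. d c \<in> G (n - 1)) \<and>
     (\<forall>c. d (d c) = 0) \<and>
     \<comment> \<open>tags of the coproduct are correct, and the coproduct has degree 0\<close>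
     (\<forall>c p a q b. (p, a, q, b) \<in> set (\<Delta> c) \<longrightarrow> a \<in> G p \<and> b \<in> G q) \<and>
     (\<forall>n. \<forall>c\<in>G n. \<forall>p a q b. (p, a, q, b) \<in> set (\<Delta> c) \<longrightarrow> p + q = n) \<and>
     \<comment> \<open>the coproduct is linear\<close>
     (\<forall>\<beta>. bilin_form sc \<beta> \<longrightarrow>
        (\<forall>c c'. tev (\<lambda>p a q b. \<beta> a b) (\<Delta> (c + c')) =
                tev (\<lambda>p a q b. \<beta> a b) (\<Delta> c) + tev (\<lambda>p a q b. \<beta> a b) (\<Delta> c')) \<and>
        (\<forall>k c. tev (\<lambda>p a q b. \<beta> a b) (\<Delta> (sc k c)) = k * tev (\<lambda>p a q b. \<beta> a b) (\<Delta> c))) \<and>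
     \<comment> \<open>coassociativity\<close>
     (\<forall>\<tau>. trilin_form sc \<tau> \<longrightarrow> (\<forall>c.
        tev (\<lambda>p a q b. tev (\<lambda>p' a' q' b'. \<tau> a' b' b) (\<Delta> a)) (\<Delta> c) =
        tev (\<lambda>p a q b. tev (\<lambda>p' a' q' b'. \<tau> a a' b') (\<Delta> b)) (\<Delta> c))) \<and>
     \<comment> \<open>counit: a linear map of degree 0 to the ground field (concentrated in degree 0)\<close>
     Vector_Spaces.linear sc (*) \<epsilon> \<and>
     (\<forall>n. n \<noteq> 0 \<longrightarrow> (\<forall>c\<in>G n. \<epsilon> c = 0)) \<and>
     (\<forall>c. tev (\<lambda>p a q b. sc (\<epsilon> a) b) (\<Delta> c) = c) \<and>
     (\<forall>c. tev (\<lambda>p a q b. sc (\<epsilon> b) a) (\<Delta> c) = c) \<and>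
     \<comment> \<open>cocommutativity (Koszul sign)\<close>
     (\<forall>\<beta>. bilin_form sc \<beta> \<longrightarrow> (\<forall>c.
        tev (\<lambda>p a q b. \<beta> a b) (\<Delta> c) = tev (\<lambda>p a q b. ksign (p * q) * \<beta> b a) (\<Delta> c))) \<and>
     \<comment> \<open>d is a coderivation and the counit is a chain map\<close>
     (\<forall>\<beta>. bilin_form sc \<beta> \<longrightarrow> (\<forall>c.
        tev (\<lambda>p a q b. \<beta> a b) (\<Delta> (d c)) =
        tev (\<lambda>p a q b. \<beta> (d a) b + ksign p * \<beta> a (d b)) (\<Delta> c))) \<and>
     (\<forall>c. \<epsilon> (d c) = 0)"

text \<open>Outer action (\<alpha>, \<xi>) of the dg Lie algebra (g, dg, brg) on a graded object T whose
differential and bracket are given on homogeneous components: dT n is the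
differential on degree n, brT m n the bracket of degree m and degree n elements.\<close>
definition outer_action ::
  "('k::field \<Rightarrow> 'g::ab_group_add \<Rightarrow> 'g) \<Rightarrow> (int \<Rightarrow> 'g set) \<Rightarrow> ('g \<Rightarrow> 'g) \<Rightarrow> ('g \<Rightarrow> 'g \<Rightarrow> 'g)
   \<Rightarrow> ('k \<Rightarrow> 't::ab_group_add \<Rightarrow> 't) \<Rightarrow> (int \<Rightarrow> 't set) \<Rightarrow> (int \<Rightarrow> 't \<Rightarrow> 't) \<Rightarrow> (int \<Rightarrow> int \<Rightarrow> 't \<Rightarrow> 't \<Rightarrow> 't)
   \<Rightarrow> ('g \<Rightarrow> 't \<Rightarrow> 't) \<Rightarrow> ('g \<Rightarrow> 't) \<Rightarrow> bool" where
  "outer_action sg Gg dg brg sT GT dT brT \<alpha> \<xi> \<longleftrightarrow>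
     \<comment> \<open>\<alpha> : g \<otimes> T \<rightarrow> T is bilinear of degree 0\<close>
     (\<forall>m n. \<forall>x\<in>Gg m. \<forall>a\<in>GT n. \<alpha> x a \<in> GT (m + n)) \<and>
     (\<forall>m n. \<forall>x\<in>Gg m. \<forall>a\<in>GT n. \<forall>b\<in>GT n. \<forall>k.
        \<alpha> x (a + b) = \<alpha> x a + \<alpha> x b \<and> \<alpha> x (sT k a) = sT k (\<alpha> x a)) \<and>
     (\<forall>m n. \<forall>x\<in>Gg m. \<forall>y\<in>Gg m. \<forall>a\<in>GT n. \<forall>k.
        \<alpha> (x + y) a = \<alpha> x a + \<alpha> y a \<and> \<alpha> (sg k x) a = sT k (\<alpha> x a)) \<and>
     \<comment> \<open>\<xi> : g \<rightarrow> T is linear of degree -1\<close>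
     (\<forall>m. \<forall>x\<in>Gg m. \<xi> x \<in> GT (m - 1)) \<and>
     (\<forall>m. \<forall>x\<in>Gg m. \<forall>y\<in>Gg m. \<forall>k. \<xi> (x + y) = \<xi> x + \<xi> y \<and> \<xi> (sg k x) = sT k (\<xi> x)) \<and>
     \<comment> \<open>(I)\<close>
     (\<forall>m n p. \<forall>x\<in>Gg m. \<forall>y\<in>Gg n. \<forall>a\<in>GT p.
        \<alpha> (brg x y) a = \<alpha> x (\<alpha> y a) - sT (ksign (m * n)) (\<alpha> y (\<alpha> x a))) \<and>
     \<comment> \<open>(II)\<close>
     (\<forall>m p q. \<forall>x\<in>Gg m. \<forall>a\<in>GT p. \<forall>b\<in>GT q.
        \<alpha> x (brT p q a b) = brT (m + p) q (\<alpha> x a) b + sT (ksign (m * p)) (brT p (m + q) a (\<alpha> x b))) \<and>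
     \<comment> \<open>(III)\<close>
     (\<forall>m. \<forall>x\<in>Gg m. dT (m - 1) (\<xi> x) = - \<xi> (dg x)) \<and>
     \<comment> \<open>(IV)\<close>
     (\<forall>m n. \<forall>x\<in>Gg m. \<forall>y\<in>Gg n.
        \<xi> (brg x y) = - sT (ksign (n * (m - 1))) (\<alpha> y (\<xi> x)) + sT (ksign m) (\<alpha> x (\<xi> y))) \<and>
     \<comment> \<open>(V)\<close>
     (\<forall>m p. \<forall>x\<in>Gg m. \<forall>a\<in>GT p.
        dT (m + p) (\<alpha> x a) = \<alpha> (dg x) a + sT (ksign m) (\<alpha> x (dT p a)) + brT (m - 1) p (\<xi> x) a)"

definition hom_scale :: "('k \<Rightarrow> 'l \<Rightarrow> 'l) \<Rightarrow> 'k \<Rightarrow> ('c \<Rightarrow> 'l) \<Rightarrow> 'c \<Rightarrow> 'l" where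
  "hom_scale sL k f = (\<lambda>c. sL k (f c))"

definition hom_deg :: "('k::field \<Rightarrow> 'c::ab_group_add \<Rightarrow> 'c) \<Rightarrow> (int \<Rightarrow> 'c set)
    \<Rightarrow> ('k \<Rightarrow> 'l::ab_group_add \<Rightarrow> 'l) \<Rightarrow> (int \<Rightarrow> 'l set) \<Rightarrow> int \<Rightarrow> ('c \<Rightarrow> 'l) set" where
  "hom_deg sC GC sL GL n =
     {f. Vector_Spaces.linear sC sL f \<and> (\<forall>p. \<forall>c\<in>GC p. f c \<in> GL (p + n))}"

definition conv_d :: "('k::field \<Rightarrow> 'l::ab_group_add \<Rightarrow> 'l) \<Rightarrow> ('l \<Rightarrow> 'l) \<Rightarrow> ('c \<Rightarrow> 'c)
    \<Rightarrow> int \<Rightarrow> ('c \<Rightarrow> 'l) \<Rightarrow> 'c \<Rightarrow> 'l" where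
  "conv_d sL dL dC n f = (\<lambda>c. dL (f c) - sL (ksign n) (f (dC c)))"

text \<open>[f, g] = \<ell> \<circ> (f \<otimes> g) \<circ> \<Delta>, with (f \<otimes> g)(a \<otimes> b) = (-1)^(|g||a|) f a \<otimes> g b,
for f of degree m and g of degree n.\<close>
definition conv_br :: "('k::field \<Rightarrow> 'l::ab_group_add \<Rightarrow> 'l) \<Rightarrow> ('l \<Rightarrow> 'l \<Rightarrow> 'l)
    \<Rightarrow> ('c \<Rightarrow> (int \<times> 'c \<times> int \<times> 'c) list) \<Rightarrow> int \<Rightarrow> int \<Rightarrow> ('c \<Rightarrow> 'l) \<Rightarrow> ('c \<Rightarrow> 'l) \<Rightarrow> 'c \<Rightarrow> 'l" where
  "conv_br sL brL \<Delta> m n f g = (\<lambda>c. tev (\<lambda>p a q b. sL (ksign (n * p)) (brL (f a) (g b))) (\<Delta> c))"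

definition conv_alpha :: "('g \<Rightarrow> 'l \<Rightarrow> 'l) \<Rightarrow> 'g \<Rightarrow> ('c \<Rightarrow> 'l) \<Rightarrow> 'c \<Rightarrow> 'l" where
  "conv_alpha \<alpha> x f = (\<lambda>c. \<alpha> x (f c))"

definition conv_xi :: "('k \<Rightarrow> 'l \<Rightarrow> 'l) \<Rightarrow> ('c \<Rightarrow> 'k) \<Rightarrow> ('g \<Rightarrow> 'l) \<Rightarrow> 'g \<Rightarrow> 'c \<Rightarrow> 'l" where
  "conv_xi sL \<epsilon> \<xi> x = (\<lambda>c. sL (\<epsilon> c) (\<xi> x))"

end

theory Submission
  imports Defs
begin

text \<open>Every operation on Hom(C, L) is defined pointwise or through the coproduct, and
\<alpha> x is linear, so each axiom of an outer action on Hom(C, L) is the corresponding axiom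
of L applied to the values f a, g b (for a \<otimes> b running over \<Delta> c) and summed up. The
coalgebra enters only through the counit: \<epsilon> has degree 0 and kills boundaries, which gives
the degree of the lifted \<xi> and (III); and (\<epsilon> \<otimes> id) \<Delta> = id collapses the convolution
bracket of the lifted \<xi> x with f to c \<mapsto> [\<xi> x, f c] (the Koszul sign is trivial since \<epsilon>
lives in degree 0), which is exactly the correction term in (V).\<close>

lemma ksign_add: "ksign (a + b) = (ksign a * ksign b :: 'k::field)"
  by (auto simp: ksign_def)

lemma ksign_zero [simp]: "ksign 0 = 1"
  by (simp add: ksign_def)

lemma tev_additive:
  fixes u :: "'a::ab_group_add \<Rightarrow> 'b::ab_group_add"
  assumes "\<And>x y. u (x + y) = u x + u y"
  shows "u (tev \<phi> xs) = tev (\<lambda>p a q b. u (\<phi> p a q b)) xs"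
proof -
  interpret additive u by standard (rule assms)
  show ?thesis by (induct xs) (auto simp: tev_def zero add)
qed

lemma tev_add: "tev (\<lambda>p a q b. \<phi> p a q b + \<psi> p a q b) xs = tev \<phi> xs + tev \<psi> xs"
  by (induct xs) (auto simp: tev_def algebra_simps)

lemma tev_cong:
  assumes "\<And>p a q b. (p, a, q, b) \<in> set xs \<Longrightarrow> \<phi> p a q b = \<psi> p a q b"
  shows "tev \<phi> xs = tev \<psi> xs"
  using assms by (induct xs) (auto simp: tev_def)

lemma graded_vs_additive_eqI:
  fixes u w :: "'a::ab_group_add \<Rightarrow> 'b::ab_group_add"
  assumes G: "graded_vs sc G"
    and u: "\<And>x y. u (x + y) = u x + u y" and w: "\<And>x y. w (x + y) = w x + w y"
    and homogeneous: "\<And>n a. a \<in> G n \<Longrightarrow> u a = w a"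
  shows "u v = w v"
proof -
  interpret U: additive u by standard (rule u)
  interpret W: additive w by standard (rule w)
  from G obtain S f where "\<forall>n\<in>S. f n \<in> G n" "v = sum f S"
    unfolding graded_vs_def by blast
  then show ?thesis
    using homogeneous by (auto simp: U.sum W.sum intro!: sum.cong)
qed

text \<open>(I) and (V) are postulated only on homogeneous elements, but the values f c of a map
in Hom(C, L) need not be homogeneous; linearity extends them to all of L.\<close>

lemma outer_action_brg_eq:
  fixes sL :: "'k::field \<Rightarrow> 'l::ab_group_add \<Rightarrow> 'l"
  assumes L: "graded_vs sL GL" and act: "outer_action sg Gg dg brg sL GL dT brT \<alpha> \<xi>"
    and \<alpha>: "\<And>x. Vector_Spaces.linear sL sL (\<alpha> x)"
    and "x \<in> Gg m" "y \<in> Gg n"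
  shows "\<alpha> (brg x y) a = \<alpha> x (\<alpha> y a) - sL (ksign (m * n)) (\<alpha> y (\<alpha> x a))"
proof -
  interpret X: Vector_Spaces.linear sL sL "\<alpha> x" by (rule \<alpha>)
  interpret Y: Vector_Spaces.linear sL sL "\<alpha> y" by (rule \<alpha>)
  interpret XY: Vector_Spaces.linear sL sL "\<alpha> (brg x y)" by (rule \<alpha>)
  show ?thesis
  proof (rule graded_vs_additive_eqI[where u = "\<alpha> (brg x y)", OF L XY.add,
        where w = "\<lambda>a. \<alpha> x (\<alpha> y a) - sL (ksign (m * n)) (\<alpha> y (\<alpha> x a))"])
    fix p a
    assume "a \<in> GL p"
    with act \<open>x \<in> Gg m\<close> \<open>y \<in> Gg n\<close>
    show "\<alpha> (brg x y) a = \<alpha> x (\<alpha> y a) - sL (ksign (m * n)) (\<alpha> y (\<alpha> x a))"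
      unfolding outer_action_def by auto
  qed (simp add: X.add Y.add X.vs1.scale_right_distrib)
qed

lemma outer_action_d_alpha_eq:
  fixes sL :: "'k::field \<Rightarrow> 'l::ab_group_add \<Rightarrow> 'l"
  assumes L: "dgla sL GL dL brL" and act: "outer_action sg Gg dg brg sL GL (\<lambda>n. dL) (\<lambda>m n. brL) \<alpha> \<xi>"
    and \<alpha>: "\<And>x. Vector_Spaces.linear sL sL (\<alpha> x)"
    and "x \<in> Gg m"
  shows "dL (\<alpha> x a) = \<alpha> (dg x) a + sL (ksign m) (\<alpha> x (dL a)) + brL (\<xi> x) a"
proof -
  interpret X: Vector_Spaces.linear sL sL "\<alpha> x" by (rule \<alpha>)
  interpret DX: Vector_Spaces.linear sL sL "\<alpha> (dg x)" by (rule \<alpha>)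
  interpret D: Vector_Spaces.linear sL sL dL
    using L unfolding dgla_def by blast
  interpret B: Vector_Spaces.linear sL sL "brL (\<xi> x)"
    using L unfolding dgla_def by blast
  have GL: "graded_vs sL GL"
    using L unfolding dgla_def by blast
  show ?thesis
  proof (rule graded_vs_additive_eqI[OF GL,
        where u = "\<lambda>a. dL (\<alpha> x a)" and w = "\<lambda>a. \<alpha> (dg x) a + sL (ksign m) (\<alpha> x (dL a)) + brL (\<xi> x) a"])
    fix p a
    assume "a \<in> GL p"
    with act \<open>x \<in> Gg m\<close>
    show "dL (\<alpha> x a) = \<alpha> (dg x) a + sL (ksign m) (\<alpha> x (dL a)) + brL (\<xi> x) a"
      unfolding outer_action_def by auto
  qed (simp_all add: X.add DX.add D.add B.add X.vs1.scale_right_distrib)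
qed

lemma cc_dg_coalgebra_tags:
  assumes "cc_dg_coalgebra sC GC dC \<Delta> \<epsilon>" and "(p, a, q, b) \<in> set (\<Delta> c)"
  shows "a \<in> GC p" and "b \<in> GC q"
  using assms unfolding cc_dg_coalgebra_def by auto

lemma cc_dg_coalgebra_counit_left_additive:
  fixes u :: "'c::ab_group_add \<Rightarrow> 'w::ab_group_add"
  assumes C: "cc_dg_coalgebra sC GC dC \<Delta> \<epsilon>" and u: "\<And>x y. u (x + y) = u x + u y"
  shows "tev (\<lambda>p a q b. u (sC (\<epsilon> a) b)) (\<Delta> c) = u c"
proof -
  have "tev (\<lambda>p a q b. sC (\<epsilon> a) b) (\<Delta> c) = c"
    using C unfolding cc_dg_coalgebra_def by auto
  then have "u c = u (tev (\<lambda>p a q b. sC (\<epsilon> a) b) (\<Delta> c))"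
    by simp
  also have "\<dots> = tev (\<lambda>p a q b. u (sC (\<epsilon> a) b)) (\<Delta> c)"
    by (rule tev_additive[where u = u, OF u])
  finally show ?thesis ..
qed

lemma hom_deg_conv_alpha:
  assumes \<alpha>: "Vector_Spaces.linear sL sL (\<alpha> x)"
    and deg: "\<And>n a. a \<in> GL n \<Longrightarrow> \<alpha> x a \<in> GL (m + n)"
    and f: "f \<in> hom_deg sC GC sL GL n"
  shows "conv_alpha \<alpha> x f \<in> hom_deg sC GC sL GL (m + n)"
proof -
  have "Vector_Spaces.linear sC sL (\<alpha> x \<circ> f)"
    using f \<alpha> Vector_Spaces.linear_compose unfolding hom_deg_def by blast
  moreover have "\<alpha> x (f c) \<in> GL (p + (m + n))" if "c \<in> GC p" for c p
  proof -
    have "f c \<in> GL (p + n)"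
      using f that unfolding hom_deg_def by blast
    from deg[OF this] show ?thesis
      by (simp add: ac_simps)
  qed
  ultimately show ?thesis
    unfolding hom_deg_def conv_alpha_def by (simp add: comp_def)
qed

lemma hom_deg_conv_xi:
  assumes C: "cc_dg_coalgebra sC GC dC \<Delta> \<epsilon>" and L: "graded_vs sL GL"
    and \<xi>: "\<xi> x \<in> GL n"
  shows "conv_xi sL \<epsilon> \<xi> x \<in> hom_deg sC GC sL GL n"
proof -
  have vsL: "vector_space sL" and subL: "\<And>n. module.subspace sL (GL n)"
    using L unfolding graded_vs_def by auto
  interpret L: vector_space sL by (rule vsL)
  have \<epsilon>: "Vector_Spaces.linear sC (*) \<epsilon>" and vsC: "vector_space sC"
    and \<epsilon>_deg: "\<And>p c. p \<noteq> 0 \<Longrightarrow> c \<in> GC p \<Longrightarrow> \<epsilon> c = 0"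
    using C unfolding cc_dg_coalgebra_def graded_vs_def by auto
  have "Vector_Spaces.linear sC sL (conv_xi sL \<epsilon> \<xi> x)"
    using \<epsilon> unfolding Vector_Spaces.linear_iff conv_xi_def
    by (auto simp: vsC vsL L.scale_left_distrib)
  moreover have "sL (\<epsilon> c) (\<xi> x) \<in> GL (p + n)" if "c \<in> GC p" for c p
    using \<epsilon>_deg[OF _ that] \<xi> L.subspace_scale[OF subL] L.subspace_0[OF subL]
    by (cases "p = 0") auto
  ultimately show ?thesis
    unfolding hom_deg_def conv_xi_def by simp
qed

lemma conv_alpha_conv_br:
  fixes sL :: "'k::field \<Rightarrow> 'l::ab_group_add \<Rightarrow> 'l"
  assumes C: "cc_dg_coalgebra sC GC dC \<Delta> \<epsilon>"
    and \<alpha>: "Vector_Spaces.linear sL sL (\<alpha> x)"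
    and derivation: "\<And>p q a b. a \<in> GL p \<Longrightarrow> b \<in> GL q \<Longrightarrow>
        \<alpha> x (brL a b) = brL (\<alpha> x a) b + sL (ksign (m * p)) (brL a (\<alpha> x b))"
    and f: "f \<in> hom_deg sC GC sL GL P" and g: "g \<in> hom_deg sC GC sL GL Q"
  shows "conv_alpha \<alpha> x (conv_br sL brL \<Delta> P Q f g) =
    conv_br sL brL \<Delta> (m + P) Q (conv_alpha \<alpha> x f) g +
    hom_scale sL (ksign (m * P)) (conv_br sL brL \<Delta> P (m + Q) f (conv_alpha \<alpha> x g))"
proof
  fix c
  interpret A: Vector_Spaces.linear sL sL "\<alpha> x" by (rule \<alpha>)
  have termwise: "\<alpha> x (sL (ksign (Q * p)) (brL (f a) (g b))) =
      sL (ksign (Q * p)) (brL (\<alpha> x (f a)) (g b)) +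
      sL (ksign (m * P)) (sL (ksign ((m + Q) * p)) (brL (f a) (\<alpha> x (g b))))"
    if "(p, a, q, b) \<in> set (\<Delta> c)" for p a q b
  proof -
    have "f a \<in> GL (p + P)" "g b \<in> GL (q + Q)"
      using cc_dg_coalgebra_tags[OF C that] f g unfolding hom_deg_def by blast+
    then have "\<alpha> x (brL (f a) (g b)) =
        brL (\<alpha> x (f a)) (g b) + sL (ksign (m * (p + P))) (brL (f a) (\<alpha> x (g b)))"
      by (rule derivation)
    moreover have "ksign (Q * p) * ksign (m * (p + P)) = (ksign (m * P) * ksign ((m + Q) * p) :: 'k)"
      unfolding ksign_add[symmetric] by (simp add: algebra_simps)
    ultimately show ?thesis
      by (simp add: A.scale A.vs1.scale_right_distrib)
  qed
  have "\<alpha> x (tev (\<lambda>p a q b. sL (ksign (Q * p)) (brL (f a) (g b))) (\<Delta> c)) =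
      tev (\<lambda>p a q b. \<alpha> x (sL (ksign (Q * p)) (brL (f a) (g b)))) (\<Delta> c)"
    by (rule tev_additive[where u = "\<alpha> x", OF A.add])
  also have "\<dots> = tev (\<lambda>p a q b. sL (ksign (Q * p)) (brL (\<alpha> x (f a)) (g b))) (\<Delta> c) +
      tev (\<lambda>p a q b. sL (ksign (m * P)) (sL (ksign ((m + Q) * p)) (brL (f a) (\<alpha> x (g b))))) (\<Delta> c)"
    unfolding tev_add[symmetric] by (rule tev_cong) (rule termwise)
  also have "\<dots> = tev (\<lambda>p a q b. sL (ksign (Q * p)) (brL (\<alpha> x (f a)) (g b))) (\<Delta> c) +
      sL (ksign (m * P)) (tev (\<lambda>p a q b. sL (ksign ((m + Q) * p)) (brL (f a) (\<alpha> x (g b)))) (\<Delta> c))"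
    by (simp only: tev_additive[where u = "sL (ksign (m * P))", OF A.vs1.scale_right_distrib])
  finally show "conv_alpha \<alpha> x (conv_br sL brL \<Delta> P Q f g) c =
    (conv_br sL brL \<Delta> (m + P) Q (conv_alpha \<alpha> x f) g +
     hom_scale sL (ksign (m * P)) (conv_br sL brL \<Delta> P (m + Q) f (conv_alpha \<alpha> x g))) c"
    by (simp add: conv_alpha_def conv_br_def hom_scale_def)
qed

lemma conv_d_conv_xi:
  fixes sL :: "'k::field \<Rightarrow> 'l::ab_group_add \<Rightarrow> 'l"
  assumes C: "cc_dg_coalgebra sC GC dC \<Delta> \<epsilon>"
    and d: "Vector_Spaces.linear sL sL dL"
    and d_\<xi>: "dL (\<xi> x) = - \<xi> (dg x)"
  shows "conv_d sL dL dC n (conv_xi sL \<epsilon> \<xi> x) = - conv_xi sL \<epsilon> \<xi> (dg x)"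
proof -
  interpret D: Vector_Spaces.linear sL sL dL by (rule d)
  have "\<epsilon> (dC c) = 0" for c
    using C unfolding cc_dg_coalgebra_def by auto
  then show ?thesis
    by (simp add: conv_d_def conv_xi_def fun_eq_iff D.scale d_\<xi>)
qed

lemma conv_xi_brg:
  fixes sL :: "'k::field \<Rightarrow> 'l::ab_group_add \<Rightarrow> 'l"
  assumes \<alpha>x: "Vector_Spaces.linear sL sL (\<alpha> x)" and \<alpha>y: "Vector_Spaces.linear sL sL (\<alpha> y)"
    and \<xi>_brg: "\<xi> (brg x y) = - sL (ksign (n * (m - 1))) (\<alpha> y (\<xi> x)) + sL (ksign m) (\<alpha> x (\<xi> y))"
  shows "conv_xi sL \<epsilon> \<xi> (brg x y) =
    - hom_scale sL (ksign (n * (m - 1))) (conv_alpha \<alpha> y (conv_xi sL \<epsilon> \<xi> x)) +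
    hom_scale sL (ksign m) (conv_alpha \<alpha> x (conv_xi sL \<epsilon> \<xi> y))"
proof -
  interpret X: Vector_Spaces.linear sL sL "\<alpha> x" by (rule \<alpha>x)
  interpret Y: Vector_Spaces.linear sL sL "\<alpha> y" by (rule \<alpha>y)
  show ?thesis
    by (simp add: conv_alpha_def conv_xi_def hom_scale_def fun_eq_iff \<xi>_brg X.scale Y.scale
        X.vs1.scale_right_diff_distrib mult.commute)
qed

lemma conv_br_conv_xi_left:
  fixes sL :: "'k::field \<Rightarrow> 'l::ab_group_add \<Rightarrow> 'l"
  assumes C: "cc_dg_coalgebra sC GC dC \<Delta> \<epsilon>" and L: "dgla sL GL dL brL"
    and f: "f \<in> hom_deg sC GC sL GL P"
  shows "conv_br sL brL \<Delta> n P (conv_xi sL \<epsilon> \<xi> x) f = (\<lambda>c. brL (\<xi> x) (f c))"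
proof
  fix c
  interpret F: Vector_Spaces.linear sC sL f
    using f unfolding hom_deg_def by blast
  interpret B: Vector_Spaces.linear sL sL "brL (\<xi> x)"
    using L unfolding dgla_def by blast
  interpret B': Vector_Spaces.linear sL sL "\<lambda>a. brL a (f b)" for b
    using L unfolding dgla_def by blast
  have termwise: "sL (ksign (P * p)) (brL (sL (\<epsilon> a) (\<xi> x)) (f b)) = brL (\<xi> x) (f (sC (\<epsilon> a) b))"
    if "(p, a, q, b) \<in> set (\<Delta> c)" for p a q b
  proof (cases "p = 0")
    case True
    then show ?thesis
      by (simp add: F.scale B.scale B'.scale)
  next
    case False
    have "a \<in> GC p"
      using cc_dg_coalgebra_tags[OF C that] by blast
    with False C have "\<epsilon> a = 0"
      unfolding cc_dg_coalgebra_def by auto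
    then show ?thesis
      by simp
  qed
  have "tev (\<lambda>p a q b. sL (ksign (P * p)) (brL (sL (\<epsilon> a) (\<xi> x)) (f b))) (\<Delta> c) =
      tev (\<lambda>p a q b. brL (\<xi> x) (f (sC (\<epsilon> a) b))) (\<Delta> c)"
    by (rule tev_cong) (rule termwise)
  also have "\<dots> = brL (\<xi> x) (f c)"
    by (rule cc_dg_coalgebra_counit_left_additive[OF C]) (simp add: F.add B.add)
  finally show "conv_br sL brL \<Delta> n P (conv_xi sL \<epsilon> \<xi> x) f c = brL (\<xi> x) (f c)"
    by (simp add: conv_br_def conv_xi_def)
qed

lemma conv_d_conv_alpha:
  fixes sL :: "'k::field \<Rightarrow> 'l::ab_group_add \<Rightarrow> 'l"
  assumes C: "cc_dg_coalgebra sC GC dC \<Delta> \<epsilon>" and L: "dgla sL GL dL brL"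
    and \<alpha>: "Vector_Spaces.linear sL sL (\<alpha> x)"
    and d_\<alpha>: "\<And>a. dL (\<alpha> x a) = \<alpha> (dg x) a + sL (ksign m) (\<alpha> x (dL a)) + brL (\<xi> x) a"
    and f: "f \<in> hom_deg sC GC sL GL P"
  shows "conv_d sL dL dC (m + P) (conv_alpha \<alpha> x f) =
    conv_alpha \<alpha> (dg x) f + hom_scale sL (ksign m) (conv_alpha \<alpha> x (conv_d sL dL dC P f)) +
    conv_br sL brL \<Delta> (m - 1) P (conv_xi sL \<epsilon> \<xi> x) f"
proof -
  interpret A: Vector_Spaces.linear sL sL "\<alpha> x" by (rule \<alpha>)
  show ?thesis
    unfolding conv_br_conv_xi_left[OF C L f]
    by (simp add: conv_d_def conv_alpha_def hom_scale_def fun_eq_iff d_\<alpha> A.diff A.scale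
        ksign_add algebra_simps)
qed

theorem lemma3p14:
  fixes sg :: "'k::field \<Rightarrow> 'g::ab_group_add \<Rightarrow> 'g" and Gg :: "int \<Rightarrow> 'g set"
    and dg :: "'g \<Rightarrow> 'g" and brg :: "'g \<Rightarrow> 'g \<Rightarrow> 'g"
    and sL :: "'k \<Rightarrow> 'l::ab_group_add \<Rightarrow> 'l" and GL :: "int \<Rightarrow> 'l set"
    and dL :: "'l \<Rightarrow> 'l" and brL :: "'l \<Rightarrow> 'l \<Rightarrow> 'l"
    and sC :: "'k \<Rightarrow> 'c::ab_group_add \<Rightarrow> 'c" and GC :: "int \<Rightarrow> 'c set"
    and dC :: "'c \<Rightarrow> 'c" and \<Delta> :: "'c \<Rightarrow> (int \<times> 'c \<times> int \<times> 'c) list" and \<epsilon> :: "'c \<Rightarrow> 'k"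
    and \<alpha> :: "'g \<Rightarrow> 'l \<Rightarrow> 'l" and \<xi> :: "'g \<Rightarrow> 'l"
  assumes g: "dgla sg Gg dg brg"
    and L: "dgla sL GL dL brL"
    and C: "cc_dg_coalgebra sC GC dC \<Delta> \<epsilon>"
    and act: "outer_action sg Gg dg brg sL GL (\<lambda>n. dL) (\<lambda>m n. brL) \<alpha> \<xi>"
    and \<alpha>_lin1: "\<And>x. Vector_Spaces.linear sL sL (\<alpha> x)"
    and \<alpha>_lin2: "\<And>a. Vector_Spaces.linear sg sL (\<lambda>x. \<alpha> x a)"
    and \<xi>_lin: "Vector_Spaces.linear sg sL \<xi>"
  shows "outer_action sg Gg dg brg
           (hom_scale sL) (hom_deg sC GC sL GL) (conv_d sL dL dC) (conv_br sL brL \<Delta>)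
           (conv_alpha \<alpha>) (conv_xi sL \<epsilon> \<xi>)"
proof -
  have GL: "graded_vs sL GL" and dL: "Vector_Spaces.linear sL sL dL"
    using L unfolding dgla_def by auto
  interpret L: vector_space sL
    using GL unfolding graded_vs_def by blast
  note pointwise = act[unfolded outer_action_def]
  show ?thesis
    unfolding outer_action_def
    apply (intro conjI allI ballI)
    subgoal by (rule hom_deg_conv_alpha[OF \<alpha>_lin1]) (use pointwise in auto)
    subgoal using \<alpha>_lin1 by (simp add: conv_alpha_def fun_eq_iff Vector_Spaces.linear_iff)
    subgoal using \<alpha>_lin1 by (simp add: conv_alpha_def hom_scale_def fun_eq_iff Vector_Spaces.linear_iff)
    subgoal using \<alpha>_lin2 by (simp add: conv_alpha_def fun_eq_iff Vector_Spaces.linear_iff)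
    subgoal using \<alpha>_lin2 by (simp add: conv_alpha_def hom_scale_def fun_eq_iff Vector_Spaces.linear_iff)
    subgoal by (rule hom_deg_conv_xi[OF C GL]) (use pointwise in auto)
    subgoal using \<xi>_lin
      by (simp add: conv_xi_def fun_eq_iff Vector_Spaces.linear_iff L.scale_right_distrib)
    subgoal using \<xi>_lin
      by (simp add: conv_xi_def hom_scale_def fun_eq_iff Vector_Spaces.linear_iff L.scale_left_commute)
    subgoal by (simp add: conv_alpha_def hom_scale_def fun_eq_iff outer_action_brg_eq[OF GL act \<alpha>_lin1])
    subgoal by (rule conv_alpha_conv_br[OF C \<alpha>_lin1]) (use pointwise in auto)
    subgoal by (rule conv_d_conv_xi[OF C dL]) (use pointwise in auto)
    subgoal by (rule conv_xi_brg[OF \<alpha>_lin1 \<alpha>_lin1]) (use pointwise in auto)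
    subgoal by (rule conv_d_conv_alpha[OF C L \<alpha>_lin1]) (auto intro: outer_action_d_alpha_eq[OF L act \<alpha>_lin1])
    done
qed

end
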